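(* Let $f$ be a strategy-proof and non-bossy allocation mechanism over a basic categorized domain with $p\geq 2$. For any profile $P=(R_1,\ldots,R_n)$, any agent $j$, any bundle $\vec d$, and any linear order $R_j'$ that is a pushup of $\vec d$ from $R_j$, either $f(R_j',R_{-j})=f(P)$ or $f^j(R_j',R_{-j})=\vec d$.
   Context: Basic categorized domain: $n$ agents $\{1,\ldots,n\}$, $p$ categories $D_i=\{1,\ldots,n\}$ of indivisible items, bundles $\mathfrak D=D_1\times\cdots\times D_p$, $[\vec d]_i$ the $i$-th component. Each agent $j$ has a linear order $R_j$ over $\mathfrak D$; a profile is $P=(R_1,\ldots,R_n)$ and $(R_j',R_{-j})$ replaces $R_j$ by $R_j'$. An allocation is a map $A:\{1,\ldots,n\}\to\mathfrak D$ with $\{[A(1)]_i,\ldots,[A(n)]_i\}=D_i$ for each $i$. An allocation mechanism $f$ maps profiles to allocations; $f^j(P)$ is agent $j$'s bundle. Strategy-proofness: for all $P,j,R_j'$, $f^j(P)$ is ranked weakly above $f^j(R_j',R_{-j})$ in $R_j$. Non-bossiness: for all $P,j,R_j'$, if $f^j(P)=f^j(R_j',R_{-j})$ then $f(P)=f(R_j',R_{-j})$. A linear order $R'$ is a pushup of $\vec d$ from $R$ if $R'$ is obtained from $R$ by raising the position of $\vec d$ while keeping the relative order of all other bundles unchanged. *)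

theory Defs
  imports Main
begin

(* Agents are the elements of the finite type 'a (n = CARD('a)).
   Categories are the elements of the finite type 'c (p = CARD('c)).
   Every category D_i consists of n items, identified with the elements of 'a. *)

type_synonym ('c,'a) bndl = "'c \<Rightarrow> 'a"

(* A preference: linear order on all bundles; (x,y) \<in> R means x is ranked weakly above y. *)
definition is_pref :: "('c,'a) bndl rel \<Rightarrow> bool" where
  "is_pref R \<longleftrightarrow> linear_order_on UNIV R"

definition is_profile :: "('a \<Rightarrow> ('c,'a) bndl rel) \<Rightarrow> bool" where
  "is_profile P \<longleftrightarrow> (\<forall>j. is_pref (P j))"

definition is_allocation :: "('a \<Rightarrow> ('c,'a) bndl) \<Rightarrow> bool" where
  "is_allocation A \<longleftrightarrow> (\<forall>i. (\<lambda>j. A j i) ` UNIV = UNIV)"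

definition is_mechanism ::
  "(('a \<Rightarrow> ('c,'a) bndl rel) \<Rightarrow> ('a \<Rightarrow> ('c,'a) bndl)) \<Rightarrow> bool" where
  "is_mechanism f \<longleftrightarrow> (\<forall>P. is_profile P \<longrightarrow> is_allocation (f P))"

definition strategy_proof ::
  "(('a \<Rightarrow> ('c,'a) bndl rel) \<Rightarrow> ('a \<Rightarrow> ('c,'a) bndl)) \<Rightarrow> bool" where
  "strategy_proof f \<longleftrightarrow>
     (\<forall>P j R'. is_profile P \<longrightarrow> is_pref R' \<longrightarrow> (f P j, f (P(j := R')) j) \<in> P j)"

definition non_bossy ::
  "(('a \<Rightarrow> ('c,'a) bndl rel) \<Rightarrow> ('a \<Rightarrow> ('c,'a) bndl)) \<Rightarrow> bool" where
  "non_bossy f \<longleftrightarrow>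
     (\<forall>P j R'. is_profile P \<longrightarrow> is_pref R' \<longrightarrow>
        f P j = f (P(j := R')) j \<longrightarrow> f P = f (P(j := R')))"

definition pushup :: "('c,'a) bndl rel \<Rightarrow> ('c,'a) bndl \<Rightarrow> ('c,'a) bndl rel \<Rightarrow> bool" where
  "pushup R d R' \<longleftrightarrow> is_pref R \<and> is_pref R' \<and> R' \<noteq> R \<and>
     (\<forall>x y. x \<noteq> d \<longrightarrow> y \<noteq> d \<longrightarrow> ((x, y) \<in> R' \<longleftrightarrow> (x, y) \<in> R)) \<and>
     (\<forall>x. (d, x) \<in> R \<longrightarrow> (d, x) \<in> R')"

end

theory Submission
  imports Defs
begin

text \<open>Strategy-proofness, applied once at the true profile and once at the deviated one,
  makes agent j weakly prefer its old bundle under R and its new bundle under R'.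
  A pushup of d reverses no comparison between bundles other than d, so unless j now
  receives d, the two bundles coincide, and non-bossiness then fixes the whole allocation.\<close>

lemma is_pref_antisym: "is_pref R \<Longrightarrow> antisym R"
  unfolding is_pref_def linear_order_on_def partial_order_on_def by blast

lemma pushup_no_reversal:
  assumes "pushup R d R'" and "(x, y) \<in> R" and "(y, x) \<in> R'" and "y \<noteq> d"
  shows "x = y"
proof (cases "x = d")
  case True
  with assms have "(x, y) \<in> R'" unfolding pushup_def by blast
  with assms(1,3) show ?thesis
    unfolding pushup_def by (blast dest: is_pref_antisym antisymD)
next
  case False
  with assms have "(y, x) \<in> R" unfolding pushup_def by blast
  with assms(1,2) show ?thesis
    unfolding pushup_def by (blast dest: is_pref_antisym antisymD)
qed

lemma strategy_proof_at_deviation: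
  assumes "strategy_proof f" and "is_profile P" and "is_pref R'"
  shows "(f P j, f (P(j := R')) j) \<in> P j"
    and "(f (P(j := R')) j, f P j) \<in> R'"
proof -
  show "(f P j, f (P(j := R')) j) \<in> P j"
    using assms unfolding strategy_proof_def by blast
  have "is_profile (P(j := R'))"
    using assms(2,3) unfolding is_profile_def by simp
  moreover have "is_pref (P j)"
    using assms(2) unfolding is_profile_def by simp
  ultimately have "(f (P(j := R')) j, f ((P(j := R'))(j := P j)) j) \<in> (P(j := R')) j"
    using assms(1) unfolding strategy_proof_def by blast
  then show "(f (P(j := R')) j, f P j) \<in> R'"
    by simp
qed

theorem lemma2:
  fixes f :: "('a::finite \<Rightarrow> ('c::finite \<Rightarrow> 'a) rel) \<Rightarrow> ('a \<Rightarrow> ('c \<Rightarrow> 'a))"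
    and P :: "'a \<Rightarrow> ('c \<Rightarrow> 'a) rel"
    and j :: 'a and d :: "'c \<Rightarrow> 'a" and R' :: "('c \<Rightarrow> 'a) rel"
  assumes "card (UNIV :: 'c set) \<ge> 2"
    and "is_mechanism f" and "strategy_proof f" and "non_bossy f"
    and "is_profile P"
    and "pushup (P j) d R'"
  shows "f (P(j := R')) = f P \<or> f (P(j := R')) j = d"
proof (rule disjCI)
  assume not_d: "f (P(j := R')) j \<noteq> d"
  have pref': "is_pref R'"
    using assms(6) unfolding pushup_def by blast
  have "f P j = f (P(j := R')) j"
    using pushup_no_reversal[OF assms(6) _ _ not_d]
      strategy_proof_at_deviation[OF assms(3,5) pref'] by blast
  then show "f (P(j := R')) = f P"
    using assms(4,5) pref' unfolding non_bossy_def by metis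
qed

end
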